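(* Let $A$ be an $m\times n$ matrix with entries in $[0,1]$ and no zero column, let $\epsilon>0$, $\alpha>0$, and run DIMSUM on $A$ with parameter $\gamma\ge \alpha/\epsilon$, producing $B$. Then for any two columns $c_i,c_j$ with $\cos(c_i,c_j)\ge\epsilon$ and any $\delta>0$, $$\Pr\left[\|c_i\|\|c_j\|\,b_{ij}>(1+\delta)[A^TA]_{ij}\right]\le\left(\frac{e^{\delta}}{(1+\delta)^{1+\delta}}\right)^{\alpha},$$ and for any $\delta\in(0,1)$, $$\Pr\left[\|c_i\|\|c_j\|\,b_{ij}<(1-\delta)[A^TA]_{ij}\right]<\exp(-\alpha\delta^2/2).$$
   Context: Let $A=(a_{ki})$ be an $m\times n$ real matrix with rows $r_1,\dots,r_m$ and columns $c_1,\dots,c_n$; $\|c_i\|$ is the Euclidean norm of column $i$ (assumed nonzero), and $\cos(c_i,c_j)=\frac{c_i^Tc_j}{\|c_i\|\|c_j\|}$. DIMSUM with parameter $\gamma>0$ is the following randomized procedure. For each pair of column indices $(i,j)$ set $p_{ij}=\min\!\left(1,\frac{\gamma}{\|c_i\|\|c_j\|}\right)$. For each row $k$ and each pair $(i,j)$ with $a_{ki}a_{kj}\neq 0$, independently (over all $k$ and all pairs) with probability $p_{ij}$ the value $a_{ki}a_{kj}$ is emitted to key $(i,j)$ (one "emission"); equivalently let $X_{ijk}$ equal $a_{ki}a_{kj}$ with probability $p_{ij}$ and $0$ otherwise. The output is the $n\times n$ matrix $B$ with $b_{ij}=\frac{1}{\gamma}\sum_{k=1}^m X_{ijk}$ if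 $\frac{\gamma}{\|c_i\|\|c_j\|}\le 1$, and $b_{ij}=\frac{1}{\|c_i\|\|c_j\|}\sum_{k=1}^m X_{ijk}$ otherwise. *)

theory Defs
  imports "HOL-Probability.Probability"
begin

text \<open>An m x n real matrix is represented as A :: nat => nat => real, with entry
  a_ki = A k i for row k < m and column i < n.\<close>

definition col_norm :: "(nat \<Rightarrow> nat \<Rightarrow> real) \<Rightarrow> nat \<Rightarrow> nat \<Rightarrow> real" where
  "col_norm A m i = sqrt (\<Sum>k<m. (A k i)\<^sup>2)"

definition col_inner :: "(nat \<Rightarrow> nat \<Rightarrow> real) \<Rightarrow> nat \<Rightarrow> nat \<Rightarrow> nat \<Rightarrow> real" where
  "col_inner A m i j = (\<Sum>k<m. A k i * A k j)"

definition col_cos :: "(nat \<Rightarrow> nat \<Rightarrow> real) \<Rightarrow> nat \<Rightarrow> nat \<Rightarrow> nat \<Rightarrow> real" where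
  "col_cos A m i j = col_inner A m i j / (col_norm A m i * col_norm A m j)"

definition dimsum_p :: "(nat \<Rightarrow> nat \<Rightarrow> real) \<Rightarrow> nat \<Rightarrow> real \<Rightarrow> nat \<Rightarrow> nat \<Rightarrow> real" where
  "dimsum_p A m \<gamma> i j = min 1 (\<gamma> / (col_norm A m i * col_norm A m j))"

definition dimsum_slots :: "(nat \<Rightarrow> nat \<Rightarrow> real) \<Rightarrow> nat \<Rightarrow> nat \<Rightarrow> (nat \<times> nat \<times> nat) set" where
  "dimsum_slots A m n = {(k,i,j). k < m \<and> i < n \<and> j < n \<and> A k i * A k j \<noteq> 0}"

text \<open>Randomness of DIMSUM: independent coin flips, slot (k,i,j) succeeds
  (i.e. emits a_ki a_kj to key (i,j)) with probability p_ij.\<close>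
definition dimsum_coins ::
  "(nat \<Rightarrow> nat \<Rightarrow> real) \<Rightarrow> nat \<Rightarrow> nat \<Rightarrow> real \<Rightarrow> (nat \<times> nat \<times> nat \<Rightarrow> bool) pmf" where
  "dimsum_coins A m n \<gamma> =
     Pi_pmf (dimsum_slots A m n) False (\<lambda>(k,i,j). bernoulli_pmf (dimsum_p A m \<gamma> i j))"

definition dimsum_X ::
  "(nat \<Rightarrow> nat \<Rightarrow> real) \<Rightarrow> (nat \<times> nat \<times> nat \<Rightarrow> bool) \<Rightarrow> nat \<Rightarrow> nat \<Rightarrow> nat \<Rightarrow> real" where
  "dimsum_X A \<omega> i j k = (if \<omega> (k,i,j) then A k i * A k j else 0)"

definition dimsum_b ::
  "(nat \<Rightarrow> nat \<Rightarrow> real) \<Rightarrow> nat \<Rightarrow> real \<Rightarrow> (nat \<times> nat \<times> nat \<Rightarrow> bool) \<Rightarrow> nat \<Rightarrow> nat \<Rightarrow> real" where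
  "dimsum_b A m \<gamma> \<omega> i j =
     (if \<gamma> / (col_norm A m i * col_norm A m j) \<le> 1
      then (1 / \<gamma>) * (\<Sum>k<m. dimsum_X A \<omega> i j k)
      else (1 / (col_norm A m i * col_norm A m j)) * (\<Sum>k<m. dimsum_X A \<omega> i j k))"

end

theory Submission
  imports Defs
begin

text \<open>The rescaled estimate \<open>\<parallel>c\<^sub>i\<parallel>\<parallel>c\<^sub>j\<parallel> b\<^sub>i\<^sub>j\<close> equals \<open>S / p\<^sub>i\<^sub>j\<close>, where \<open>S = \<Sum>\<^sub>k X\<^sub>i\<^sub>j\<^sub>k\<close> is a sum of
  independent \<open>[0,1]\<close>-valued variables with mean \<open>\<mu> = p\<^sub>i\<^sub>j [A\<^sup>TA]\<^sub>i\<^sub>j\<close>. If \<open>\<gamma> \<le> \<parallel>c\<^sub>i\<parallel>\<parallel>c\<^sub>j\<parallel>\<close>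
  then \<open>\<mu> = \<gamma> cos(c\<^sub>i,c\<^sub>j) \<ge> \<alpha>\<close>, and both bounds are the multiplicative Chernoff bounds for \<open>S\<close>:
  Markov's inequality for \<open>exp(tS)\<close> with \<open>t = ln(1 \<plusminus> \<delta>)\<close>, together with
  \<open>E exp(tS) \<le> exp((e\<^sup>t - 1)\<mu>)\<close>, which follows from convexity of \<open>exp\<close> on each summand.
  Otherwise \<open>p\<^sub>i\<^sub>j = 1\<close>, every relevant emission happens, and the estimate is exact.\<close>

lemma exp_mult_le_chord:
  fixes a t :: real
  assumes "0 \<le> a" "a \<le> 1"
  shows "exp (t * a) \<le> 1 - a + a * exp t"
  using convex_onD[OF exp_convex, of a 0 t] assms by (simp add: mult.commute)

lemma chernoff_upper_base_le_one:
  fixes \<delta> :: real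
  assumes "0 < \<delta>"
  shows "exp \<delta> / (1 + \<delta>) powr (1 + \<delta>) \<le> 1"
proof -
  have "ln (1 / (1 + \<delta>)) \<le> 1 / (1 + \<delta>) - 1"
    using assms by (intro ln_le_minus_one) auto
  then have "\<delta> - (1 + \<delta>) * ln (1 + \<delta>) \<le> 0"
    using assms by (simp add: ln_div field_simps)
  then show ?thesis
    using assms by (simp add: powr_def exp_diff[symmetric])
qed

lemma chernoff_lower_exponent_less:
  fixes \<delta> :: real
  assumes "0 < \<delta>" "\<delta> < 1"
  shows "- \<delta> - (1 - \<delta>) * ln (1 - \<delta>) < - \<delta>\<^sup>2 / 2"
proof -
  define f where "f y = - y - (1 - y) * ln (1 - y) + y\<^sup>2 / 2" for y :: real
  have "f 0 > f \<delta>"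
  proof (rule DERIV_neg_imp_decreasing_open[OF assms(1)])
    fix y :: real assume y: "0 < y" "y < \<delta>"
    have "(f has_real_derivative ln (1 - y) + y) (at y)"
      unfolding f_def using y assms
      by (auto intro!: derivative_eq_intros simp: divide_simps)
    moreover have "ln (1 - y) < - y"
      using ln_le_minus_one[of "1 - y"] ln_eq_minus_one[of "1 - y"] y assms by force
    ultimately show "\<exists>z. (f has_real_derivative z) (at y) \<and> z < 0"
      by auto
  next
    show "continuous_on {0..\<delta>} f"
      unfolding f_def using assms by (intro continuous_intros) auto
  qed
  then show ?thesis
    by (simp add: f_def)
qed

locale weighted_bernoulli_sum =
  fixes I :: "'a set" and q x :: "'a \<Rightarrow> real"
  assumes finite_I: "finite I"
    and q_range: "s \<in> I \<Longrightarrow> 0 \<le> q s \<and> q s \<le> 1"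
    and x_range: "s \<in> I \<Longrightarrow> 0 \<le> x s \<and> x s \<le> 1"
begin

definition coins :: "('a \<Rightarrow> bool) pmf" where
  "coins = Pi_pmf I False (\<lambda>s. bernoulli_pmf (q s))"

definition S :: "('a \<Rightarrow> bool) \<Rightarrow> real" where
  "S \<omega> = (\<Sum>s\<in>I. if \<omega> s then x s else 0)"

definition mean :: real where
  "mean = (\<Sum>s\<in>I. q s * x s)"

lemma finite_set_coins: "finite (set_pmf coins)"
  unfolding coins_def by (auto simp: set_Pi_pmf finite_I intro!: finite_PiE_dflt)

lemma expectation_exp_S_le:
  "measure_pmf.expectation coins (\<lambda>\<omega>. exp (t * S \<omega>)) \<le> exp ((exp t - 1) * mean)"
proof -
  define g where "g s b = exp (t * (if b then x s else 0))" for s b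
  have "measure_pmf.expectation coins (\<lambda>\<omega>. exp (t * S \<omega>))
      = measure_pmf.expectation coins (\<lambda>\<omega>. \<Prod>s\<in>I. g s (\<omega> s))"
    by (simp add: S_def g_def sum_distrib_left exp_sum finite_I)
  also have "\<dots> = (\<Prod>s\<in>I. measure_pmf.expectation (bernoulli_pmf (q s)) (g s))"
    unfolding coins_def
    by (rule expectation_prod_Pi_pmf[OF finite_I]) (auto simp: g_def intro!: integrable_measure_pmf_finite)
  also have "\<dots> \<le> (\<Prod>s\<in>I. exp ((exp t - 1) * (q s * x s)))"
  proof (rule prod_mono)
    fix s assume s: "s \<in> I"
    have "measure_pmf.expectation (bernoulli_pmf (q s)) (g s) = q s * exp (t * x s) + (1 - q s)"
      using q_range[OF s] by (simp add: g_def)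
    also have "\<dots> \<le> q s * (1 - x s + x s * exp t) + (1 - q s)"
      using q_range[OF s] x_range[OF s] by (intro add_right_mono mult_left_mono exp_mult_le_chord) auto
    also have "\<dots> = 1 + (exp t - 1) * (q s * x s)"
      by (simp add: algebra_simps)
    also have "\<dots> \<le> exp ((exp t - 1) * (q s * x s))"
      by (rule exp_ge_add_one_self)
    finally show "0 \<le> measure_pmf.expectation (bernoulli_pmf (q s)) (g s) \<and>
        measure_pmf.expectation (bernoulli_pmf (q s)) (g s) \<le> exp ((exp t - 1) * (q s * x s))"
      using q_range[OF s] by (simp add: g_def)
  qed
  also have "\<dots> = exp ((exp t - 1) * mean)"
    by (simp add: mean_def sum_distrib_left exp_sum finite_I)
  finally show ?thesis .
qed

text \<open>The event is written as \<open>t a \<le> t S\<close> so that one bound serves both tails: \<open>t > 0\<close> for the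
  upper and \<open>t < 0\<close> for the lower one.\<close>

lemma prob_exp_tail_le:
  "measure_pmf.prob coins {\<omega>. t * a \<le> t * S \<omega>} \<le> exp ((exp t - 1) * mean - t * a)"
proof -
  have "measure_pmf.prob coins {\<omega>. t * a \<le> t * S \<omega>}
      = measure_pmf.prob coins {\<omega>\<in>space coins. exp (t * a) \<le> exp (t * S \<omega>)}"
    by simp
  also have "\<dots> \<le> measure_pmf.expectation coins (\<lambda>\<omega>. exp (t * S \<omega>)) / exp (t * a)"
    by (rule integral_Markov_inequality_measure[where A = "{}"])
       (auto intro: integrable_measure_pmf_finite finite_set_coins)
  also have "\<dots> \<le> exp ((exp t - 1) * mean) / exp (t * a)"
    by (intro divide_right_mono expectation_exp_S_le) simp
  finally show ?thesis
    by (simp add: exp_diff)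
qed

lemma chernoff_upper_tail:
  assumes "0 < \<delta>"
  shows "measure_pmf.prob coins {\<omega>. S \<omega> > (1 + \<delta>) * mean}
    \<le> (exp \<delta> / (1 + \<delta>) powr (1 + \<delta>)) powr mean"
proof -
  define t where "t = ln (1 + \<delta>)"
  have "measure_pmf.prob coins {\<omega>. S \<omega> > (1 + \<delta>) * mean}
      \<le> measure_pmf.prob coins {\<omega>. t * ((1 + \<delta>) * mean) \<le> t * S \<omega>}"
    using assms by (intro measure_pmf.finite_measure_mono) (auto simp: t_def intro!: mult_left_mono)
  also have "\<dots> \<le> exp ((exp t - 1) * mean - t * ((1 + \<delta>) * mean))"
    by (rule prob_exp_tail_le)
  also have "\<dots> = (exp \<delta> / (1 + \<delta>) powr (1 + \<delta>)) powr mean"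
    using assms by (simp add: t_def powr_def ln_div algebra_simps)
  finally show ?thesis .
qed

lemma chernoff_lower_tail:
  assumes "0 < \<delta>" "\<delta> < 1" "0 < mean"
  shows "measure_pmf.prob coins {\<omega>. S \<omega> < (1 - \<delta>) * mean} < exp (- mean * \<delta>\<^sup>2 / 2)"
proof -
  define t where "t = ln (1 - \<delta>)"
  have "measure_pmf.prob coins {\<omega>. S \<omega> < (1 - \<delta>) * mean}
      \<le> measure_pmf.prob coins {\<omega>. t * ((1 - \<delta>) * mean) \<le> t * S \<omega>}"
    using assms by (intro measure_pmf.finite_measure_mono) (auto simp: t_def intro!: mult_left_mono_neg)
  also have "\<dots> \<le> exp ((exp t - 1) * mean - t * ((1 - \<delta>) * mean))"
    by (rule prob_exp_tail_le)
  also have "\<dots> = exp (mean * (- \<delta> - (1 - \<delta>) * ln (1 - \<delta>)))"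
    using assms by (simp add: t_def algebra_simps)
  also have "\<dots> < exp (- mean * \<delta>\<^sup>2 / 2)"
    using mult_strict_left_mono[OF chernoff_lower_exponent_less[OF assms(1,2)] assms(3)] by simp
  finally show ?thesis .
qed

lemma S_eq_mean_if_certain:
  assumes "\<And>s. s \<in> I \<Longrightarrow> x s \<noteq> 0 \<Longrightarrow> q s = 1" and "\<omega> \<in> set_pmf coins"
  shows "S \<omega> = mean"
  unfolding S_def mean_def
proof (rule sum.cong)
  fix s assume s: "s \<in> I"
  have "\<omega> s \<in> set_pmf (bernoulli_pmf (q s))"
    using assms(2) s by (auto simp: coins_def set_Pi_pmf finite_I PiE_dflt_def)
  then show "(if \<omega> s then x s else 0) = q s * x s"
    using assms(1)[OF s] by (cases "x s = 0"; cases "\<omega> s") (auto simp: set_pmf_eq)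
qed simp

end

lemma col_norm_pos:
  assumes "k < m" "A k l \<noteq> 0"
  shows "0 < col_norm A m l"
proof -
  have "0 < (A k l)\<^sup>2"
    using assms by simp
  also have "\<dots> \<le> (\<Sum>k<m. (A k l)\<^sup>2)"
    using assms by (intro member_le_sum) auto
  finally show ?thesis
    unfolding col_norm_def by simp
qed

lemma finite_dimsum_slots: "finite (dimsum_slots A m n)"
  by (rule finite_subset[of _ "{..<m} \<times> {..<n} \<times> {..<n}"]) (auto simp: dimsum_slots_def)

lemma sum_dimsum_slots_column_pair:
  assumes "i < n" "j < n"
    and "\<And>k a b. (a, b) \<noteq> (i, j) \<Longrightarrow> f (k, a, b) = 0"
    and "\<And>k. k < m \<Longrightarrow> A k i * A k j = 0 \<Longrightarrow> f (k, i, j) = 0"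
  shows "(\<Sum>s\<in>dimsum_slots A m n. f s) = (\<Sum>k<m. f (k, i, j))"
proof -
  have "(\<Sum>s\<in>dimsum_slots A m n. f s) = (\<Sum>s\<in>(\<lambda>k. (k, i, j)) ` {..<m}. f s)"
    using assms by (intro sum.mono_neutral_cong finite_dimsum_slots) (auto simp: dimsum_slots_def image_iff)
  also have "\<dots> = (\<Sum>k<m. f (k, i, j))"
    by (subst sum.reindex) (auto simp: inj_on_def)
  finally show ?thesis .
qed

locale dimsum_entry =
  fixes A :: "nat \<Rightarrow> nat \<Rightarrow> real" and m n :: nat and \<gamma> :: real and i j :: nat
  assumes entries: "\<And>k l. k < m \<Longrightarrow> l < n \<Longrightarrow> 0 \<le> A k l \<and> A k l \<le> 1"
    and ij: "i < n" "j < n"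
    and gamma_pos: "0 < \<gamma>"
    and col_norms_pos: "0 < col_norm A m i" "0 < col_norm A m j"

sublocale dimsum_entry \<subseteq> weighted_bernoulli_sum "dimsum_slots A m n"
  "\<lambda>(k, a, b). dimsum_p A m \<gamma> a b" "\<lambda>(k, a, b). if a = i \<and> b = j then A k a * A k b else 0"
proof
  fix s assume "s \<in> dimsum_slots A m n"
  then show "0 \<le> (case s of (k, a, b) \<Rightarrow> if a = i \<and> b = j then A k a * A k b else 0) \<and>
        (case s of (k, a, b) \<Rightarrow> if a = i \<and> b = j then A k a * A k b else 0) \<le> 1"
    using entries by (force simp: dimsum_slots_def intro: mult_le_one)
next
  fix s :: "nat \<times> nat \<times> nat"
  have "0 \<le> \<gamma> / (col_norm A m a * col_norm A m b)" for a b
    using gamma_pos by (simp add: col_norm_def sum_nonneg)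
  then show "0 \<le> (case s of (k, a, b) \<Rightarrow> dimsum_p A m \<gamma> a b) \<and>
        (case s of (k, a, b) \<Rightarrow> dimsum_p A m \<gamma> a b) \<le> 1"
    by (auto simp: dimsum_p_def split: prod.split)
qed (rule finite_dimsum_slots)

context dimsum_entry
begin

lemma coins_eq: "dimsum_coins A m n \<gamma> = coins"
  unfolding dimsum_coins_def coins_def by (simp add: split_def)

lemma S_eq: "S \<omega> = (\<Sum>k<m. dimsum_X A \<omega> i j k)"
  unfolding S_def dimsum_X_def by (rule trans[OF sum_dimsum_slots_column_pair[OF ij]]) (auto cong: if_cong)

lemma mean_eq: "mean = dimsum_p A m \<gamma> i j * col_inner A m i j"
  unfolding mean_def col_inner_def sum_distrib_left
  by (rule trans[OF sum_dimsum_slots_column_pair[OF ij]]) auto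

lemma dimsum_p_pos: "0 < dimsum_p A m \<gamma> i j"
  unfolding dimsum_p_def using gamma_pos col_norms_pos by simp

lemma scaled_entry_eq:
  "col_norm A m i * col_norm A m j * dimsum_b A m \<gamma> \<omega> i j = S \<omega> / dimsum_p A m \<gamma> i j"
  unfolding S_eq using gamma_pos col_norms_pos by (simp add: dimsum_b_def dimsum_p_def min_def field_simps)

lemma mean_eq_gamma_cos:
  assumes "\<gamma> \<le> col_norm A m i * col_norm A m j"
  shows "mean = \<gamma> * col_cos A m i j"
  unfolding mean_eq using assms col_norms_pos by (simp add: dimsum_p_def col_cos_def)

lemma scaled_entry_upper_tail:
  assumes "0 < \<delta>"
  shows "measure_pmf.prob (dimsum_coins A m n \<gamma>)
      {\<omega>. col_norm A m i * col_norm A m j * dimsum_b A m \<gamma> \<omega> i j > (1 + \<delta>) * col_inner A m i j}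
    \<le> (exp \<delta> / (1 + \<delta>) powr (1 + \<delta>)) powr mean"
proof -
  have "{\<omega>. col_norm A m i * col_norm A m j * dimsum_b A m \<gamma> \<omega> i j > (1 + \<delta>) * col_inner A m i j}
      = {\<omega>. S \<omega> > (1 + \<delta>) * mean}"
    unfolding scaled_entry_eq mean_eq using dimsum_p_pos by (auto simp: field_simps)
  then show ?thesis
    using chernoff_upper_tail[OF assms] by (simp add: coins_eq)
qed

lemma scaled_entry_lower_tail:
  assumes "0 < \<delta>" "\<delta> < 1" "0 < col_inner A m i j"
  shows "measure_pmf.prob (dimsum_coins A m n \<gamma>)
      {\<omega>. col_norm A m i * col_norm A m j * dimsum_b A m \<gamma> \<omega> i j < (1 - \<delta>) * col_inner A m i j}
    < exp (- mean * \<delta>\<^sup>2 / 2)"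
proof -
  have "{\<omega>. col_norm A m i * col_norm A m j * dimsum_b A m \<gamma> \<omega> i j < (1 - \<delta>) * col_inner A m i j}
      = {\<omega>. S \<omega> < (1 - \<delta>) * mean}"
    unfolding scaled_entry_eq mean_eq using dimsum_p_pos by (auto simp: field_simps)
  moreover have "0 < mean"
    using dimsum_p_pos assms(3) by (simp add: mean_eq)
  ultimately show ?thesis
    using chernoff_lower_tail[OF assms(1,2)] by (simp add: coins_eq)
qed

lemma scaled_entry_exact:
  assumes "col_norm A m i * col_norm A m j < \<gamma>" and "\<omega> \<in> set_pmf (dimsum_coins A m n \<gamma>)"
  shows "col_norm A m i * col_norm A m j * dimsum_b A m \<gamma> \<omega> i j = col_inner A m i j"
proof -
  have p: "dimsum_p A m \<gamma> i j = 1"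
    using assms(1) col_norms_pos by (simp add: dimsum_p_def)
  then have "S \<omega> = mean"
    using assms(2) by (intro S_eq_mean_if_certain) (auto simp: coins_eq split: if_splits)
  then show ?thesis
    by (simp add: scaled_entry_eq mean_eq p)
qed

lemma scaled_entry_upper_tail_le:
  assumes "\<alpha> \<le> \<gamma> * col_cos A m i j" "0 < col_inner A m i j" "0 < \<delta>"
  shows "measure_pmf.prob (dimsum_coins A m n \<gamma>)
      {\<omega>. col_norm A m i * col_norm A m j * dimsum_b A m \<gamma> \<omega> i j > (1 + \<delta>) * col_inner A m i j}
    \<le> (exp \<delta> / (1 + \<delta>) powr (1 + \<delta>)) powr \<alpha>"
proof (cases "\<gamma> \<le> col_norm A m i * col_norm A m j")
  case True
  then have "\<alpha> \<le> mean"
    using assms(1) by (simp add: mean_eq_gamma_cos)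
  then have "(exp \<delta> / (1 + \<delta>) powr (1 + \<delta>)) powr mean \<le> (exp \<delta> / (1 + \<delta>) powr (1 + \<delta>)) powr \<alpha>"
    using chernoff_upper_base_le_one[OF assms(3)] by (intro powr_mono') auto
  then show ?thesis
    using scaled_entry_upper_tail[OF assms(3)] by linarith
next
  case False
  then have "measure_pmf.prob (dimsum_coins A m n \<gamma>)
      {\<omega>. col_norm A m i * col_norm A m j * dimsum_b A m \<gamma> \<omega> i j > (1 + \<delta>) * col_inner A m i j} = 0"
    using assms(2,3) by (subst measure_pmf_zero_iff) (auto simp: scaled_entry_exact)
  then show ?thesis
    by simp
qed

lemma scaled_entry_lower_tail_less:
  assumes "\<alpha> \<le> \<gamma> * col_cos A m i j" "0 < col_inner A m i j" "0 < \<delta>" "\<delta> < 1"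
  shows "measure_pmf.prob (dimsum_coins A m n \<gamma>)
      {\<omega>. col_norm A m i * col_norm A m j * dimsum_b A m \<gamma> \<omega> i j < (1 - \<delta>) * col_inner A m i j}
    < exp (- \<alpha> * \<delta>\<^sup>2 / 2)"
proof (cases "\<gamma> \<le> col_norm A m i * col_norm A m j")
  case True
  then have "\<alpha> \<le> mean"
    using assms(1) by (simp add: mean_eq_gamma_cos)
  then have "exp (- mean * \<delta>\<^sup>2 / 2) \<le> exp (- \<alpha> * \<delta>\<^sup>2 / 2)"
    by (simp add: mult_right_mono)
  then show ?thesis
    using scaled_entry_lower_tail[OF assms(3,4,2)] by linarith
next
  case False
  then have "measure_pmf.prob (dimsum_coins A m n \<gamma>)
      {\<omega>. col_norm A m i * col_norm A m j * dimsum_b A m \<gamma> \<omega> i j < (1 - \<delta>) * col_inner A m i j} = 0"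
    using assms(2,3) by (subst measure_pmf_zero_iff) (auto simp: scaled_entry_exact)
  then show ?thesis
    by simp
qed

end

theorem theorem3:
  fixes A :: "nat \<Rightarrow> nat \<Rightarrow> real" and m n :: nat and \<epsilon> \<alpha> \<gamma> :: real and i j :: nat
  assumes entries: "\<And>k l. k < m \<Longrightarrow> l < n \<Longrightarrow> 0 \<le> A k l \<and> A k l \<le> 1"
    and nonzero_cols: "\<And>l. l < n \<Longrightarrow> \<exists>k<m. A k l \<noteq> 0"
    and eps: "\<epsilon> > 0" and alpha: "\<alpha> > 0" and gamma: "\<gamma> \<ge> \<alpha> / \<epsilon>"
    and ij: "i < n" "j < n"
    and cos: "col_cos A m i j \<ge> \<epsilon>"
  shows "(\<forall>\<delta>>0. measure_pmf.prob (dimsum_coins A m n \<gamma>)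
            {\<omega>. col_norm A m i * col_norm A m j * dimsum_b A m \<gamma> \<omega> i j
                   > (1 + \<delta>) * col_inner A m i j}
          \<le> (exp \<delta> / (1 + \<delta>) powr (1 + \<delta>)) powr \<alpha>)
       \<and> (\<forall>\<delta>. 0 < \<delta> \<and> \<delta> < 1 \<longrightarrow> measure_pmf.prob (dimsum_coins A m n \<gamma>)
            {\<omega>. col_norm A m i * col_norm A m j * dimsum_b A m \<gamma> \<omega> i j
                   < (1 - \<delta>) * col_inner A m i j}
          < exp (- \<alpha> * \<delta>\<^sup>2 / 2))"
proof -
  have norms_pos: "0 < col_norm A m i" "0 < col_norm A m j"
    using nonzero_cols ij col_norm_pos by blast+
  have "0 < \<gamma>"
    using divide_pos_pos[OF alpha eps] gamma by linarith
  then interpret dimsum_entry A m n \<gamma> i j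
    using entries ij norms_pos by unfold_locales
  have "0 < col_cos A m i j"
    using cos eps by linarith
  then have inner_pos: "0 < col_inner A m i j"
    using mult_pos_pos[OF norms_pos] by (auto simp: col_cos_def zero_less_divide_iff)
  have "\<alpha> \<le> \<gamma> * \<epsilon>"
    using gamma eps by (simp add: field_simps)
  also have "\<dots> \<le> \<gamma> * col_cos A m i j"
    using cos \<open>0 < \<gamma>\<close> by simp
  finally show ?thesis
    using scaled_entry_upper_tail_le scaled_entry_lower_tail_less inner_pos by blast
qed

end
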